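(* Let $m\in\mathbb{N}$, $\boldsymbol{\sigma}\in\{0,1\}^m$, and let $l=|\{i\in\{1,\dots,m\}:\sigma_i=0\}|$. Let $\Delta_1(\alpha,\beta)$ be the local discrepancy of $\mathcal{H}_m(\boldsymbol{\sigma})$ and $\Delta_2(\alpha,\beta)$ the local discrepancy of $\mathcal{H}_m(\boldsymbol{\sigma}^* )$. Then $$\frac{1}{2^{2m}}\sum_{\alpha,\beta\in\mathbb{Q}^*(2^m)}\Delta_1(\alpha,\beta)\Delta_2(\alpha,\beta)=-\frac{m^2}{64}-\frac{l^2}{16}+\frac{lm}{16}-\frac{m}{192}-\frac{5}{144}-\frac{1}{9\cdot 2^{2m+2}}.$$
   Context: $\oplus$ denotes addition modulo 2. $\mathbb{Q}^*(2^m):=\{\frac1{2^m},\frac2{2^m},\dots,\frac{2^m-1}{2^m}\}$. For an $N$-element point set $\mathcal{P}$ in $[0,1)^2$ and $\alpha,\beta\in(0,1]$, the local discrepancy is $\Delta(\alpha,\beta,\mathcal{P})=A([0,\alpha)\times[0,\beta),\mathcal{P})-N\alpha\beta$, where $A([0,\alpha)\times[0,\beta),\mathcal{P})$ is the number of points of $\mathcal{P}$ in $[0,\alpha)\times[0,\beta)$. For $\boldsymbol{\sigma}\in\{0,1\}^m$ the shifted Hammersley point set is $$\mathcal{H}_m(\boldsymbol{\sigma})=\left\{\left(\frac{t_m}{2}+\frac{t_{m-1}}{2^2}+\dots+\frac{t_1}{2^m},\ \frac{s_1}{2}+\dots+\frac{s_m}{2^m}\right): t_1,\dots,t_m\in\{0,1\}\right\},$$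 with $s_j=t_j\oplus\sigma_j$; it has $2^m$ points. $\boldsymbol{\sigma}^*=(\sigma_1\oplus1,\dots,\sigma_m\oplus1)$. *)

theory Defs
  imports "HOL-Analysis.Analysis" "HOL-Library.FuncSet"
begin

definition xor2 :: "nat \<Rightarrow> nat \<Rightarrow> nat" where
  "xor2 a b = (a + b) mod 2"

definition hammersley :: "nat \<Rightarrow> (nat \<Rightarrow> nat) \<Rightarrow> (real \<times> real) set" where
  "hammersley m \<sigma> =
     (\<lambda>t. ((\<Sum>j=1..m. real (t j) / 2 ^ (m + 1 - j)),
           (\<Sum>j=1..m. real (xor2 (t j) (\<sigma> j)) / 2 ^ j)))
     ` ({1..m} \<rightarrow>\<^sub>E {0, 1})"

definition sigma_star :: "(nat \<Rightarrow> nat) \<Rightarrow> nat \<Rightarrow> nat" where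
  "sigma_star \<sigma> = (\<lambda>i. xor2 (\<sigma> i) 1)"

definition local_disc :: "(real \<times> real) set \<Rightarrow> real \<Rightarrow> real \<Rightarrow> real" where
  "local_disc P \<alpha> \<beta> =
     real (card {p \<in> P. fst p < \<alpha> \<and> snd p < \<beta>}) - real (card P) * \<alpha> * \<beta>"

definition Qstar :: "nat \<Rightarrow> real set" where
  "Qstar m = {real k / 2 ^ m | k. 1 \<le> k \<and> k \<le> 2 ^ m - 1}"

end

theory Submission
  imports Defs
begin

text \<open>Scale both coordinates by \<open>N = 2^m\<close>: the point with \<open>x = X/N\<close> has \<open>y = y\<^sub>\<sigma>(X)/N\<close>, and
  stripping the leading shift digit \<open>\<sigma>\<^sub>1\<close> relates \<open>y\<^sub>\<sigma>\<close> on even and odd \<open>X\<close> to \<open>y\<close> of the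
  shorter shift \<open>(\<sigma>\<^sub>2,\<dots>,\<sigma>\<^sub>m)\<close>. Hence the scaled discrepancy \<open>D(a,b)\<close> on the \<open>2N \<times> 2N\<close> grid
  is expressed through the \<open>N \<times> N\<close> grid: \<open>D(2a,b)\<close> and \<open>D(2a,N+b)\<close> equal the shorter \<open>D(a,b)\<close>,
  while \<open>D(2a+1,\<cdot>)\<close> is a neighbouring value \<open>D(a,\<cdot>)\<close> or \<open>D(a+1,\<cdot>)\<close> plus a linear term in \<open>b\<close>.
  For complementary shifts \<open>\<sigma>\<close> and \<open>\<sigma>\<^sup>*\<close> these neighbours are always opposite, so the sum of
  products \<open>S = \<Sum> D\<^sub>\<sigma> D\<^sub>\<sigma>\<^sub>*\<close> and the sum of neighbour products \<open>V\<close> satisfy a closed linear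
  recursion, driven by the plain sums \<open>\<Sum> D\<close>, which are explicit.\<close>

text \<open>For \<open>X = t\<^sub>1 + 2 t\<^sub>2 + \<dots> + 2\<^sup>m\<^sup>-\<^sup>1 t\<^sub>m\<close> the point of \<open>H\<^sub>m(\<sigma>)\<close> with first coordinate
  \<open>X / 2\<^sup>m\<close> has second coordinate \<open>ham_y [\<sigma>\<^sub>1,\<dots>,\<sigma>\<^sub>m] X / 2\<^sup>m\<close>.\<close>

fun ham_y :: "nat list \<Rightarrow> nat \<Rightarrow> nat" where
  "ham_y [] X = 0"
| "ham_y (c # cs) X = xor2 (X mod 2) c * 2 ^ length cs + ham_y cs (X div 2)"

lemma ham_y_less: "ham_y cs X < 2 ^ length cs"
proof (induction cs arbitrary: X)
  case Nil
  then show ?case by simp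
next
  case (Cons c cs)
  have "xor2 (X mod 2) c * 2 ^ length cs \<le> 1 * 2 ^ length cs"
    by (intro mult_right_mono) (simp_all add: xor2_def)
  moreover have "(2::nat) ^ length (c # cs) = 2 ^ length cs + 2 ^ length cs"
    by simp
  ultimately show ?case
    using Cons.IH[of "X div 2"] by (simp only: ham_y.simps)
qed

lemma ham_y_Cons_even: "ham_y (c # cs) (2 * i) = (c mod 2) * 2 ^ length cs + ham_y cs i"
  by (simp add: xor2_def)

lemma ham_y_Cons_odd: "ham_y (c # cs) (2 * i + 1) = ((c + 1) mod 2) * 2 ^ length cs + ham_y cs i"
  by (simp add: xor2_def)

definition ham_count :: "nat list \<Rightarrow> nat \<Rightarrow> nat \<Rightarrow> real" where
  "ham_count cs a b = (\<Sum>X<a. if ham_y cs X < b then 1 else 0)"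

definition ham_disc :: "nat list \<Rightarrow> nat \<Rightarrow> nat \<Rightarrow> real" where
  "ham_disc cs a b = ham_count cs a b - real a * real b / 2 ^ length cs"

definition half_sign :: "nat \<Rightarrow> real" where
  "half_sign c = (if even c then 1 / 2 else - 1 / 2)"

lemma sum_lessThan_double:
  fixes n :: nat
  shows "(\<Sum>x<2 * n. f x) = (\<Sum>i<n. f (2 * i)) + (\<Sum>i<n. f (2 * i + 1) :: 'a::comm_monoid_add)"
  by (induction n) (auto simp: algebra_simps)

lemma sum_lessThan_double_Suc:
  fixes n :: nat
  shows "(\<Sum>x<2 * n + 1. f x) = (\<Sum>i<n + 1. f (2 * i)) + (\<Sum>i<n. f (2 * i + 1) :: 'a::comm_monoid_add)"
  using sum_lessThan_double[of f n] by (simp add: algebra_simps)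

lemma ham_count_Cons_even:
  "ham_count (c # cs) (2 * a) b =
     (\<Sum>i<a. if (c mod 2) * 2 ^ length cs + ham_y cs i < b then 1 else 0) +
     (\<Sum>i<a. if ((c + 1) mod 2) * 2 ^ length cs + ham_y cs i < b then 1 else 0)"
  unfolding ham_count_def sum_lessThan_double ham_y_Cons_even ham_y_Cons_odd ..

lemma ham_count_Cons_odd:
  "ham_count (c # cs) (2 * a + 1) b =
     (\<Sum>i<a + 1. if (c mod 2) * 2 ^ length cs + ham_y cs i < b then 1 else 0) +
     (\<Sum>i<a. if ((c + 1) mod 2) * 2 ^ length cs + ham_y cs i < b then 1 else 0)"
  unfolding ham_count_def sum_lessThan_double_Suc ham_y_Cons_even ham_y_Cons_odd ..

lemma digit_parity_cases:
  fixes c :: nat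
  obtains "even c" "c mod 2 = 0" "(c + 1) mod 2 = 1" | "odd c" "c mod 2 = 1" "(c + 1) mod 2 = 0"
  by (cases "even c") (auto elim!: evenE oddE)

lemma ham_count_Cons_even_low:
  "b < 2 ^ length cs \<Longrightarrow> ham_count (c # cs) (2 * a) b = ham_count cs a b"
  unfolding ham_count_Cons_even by (cases c rule: digit_parity_cases) (simp_all add: ham_count_def)

lemma ham_count_Cons_even_high:
  "b < 2 ^ length cs \<Longrightarrow> ham_count (c # cs) (2 * a) (2 ^ length cs + b) = a + ham_count cs a b"
  using ham_y_less[of cs, THEN trans_less_add1] unfolding ham_count_Cons_even
  by (cases c rule: digit_parity_cases) (simp_all add: ham_count_def)

lemma ham_count_Cons_odd_low:
  "b < 2 ^ length cs \<Longrightarrow>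
     ham_count (c # cs) (2 * a + 1) b = ham_count cs (if even c then a + 1 else a) b"
  unfolding ham_count_Cons_odd by (cases c rule: digit_parity_cases) (simp_all add: ham_count_def)

lemma ham_count_Cons_odd_high:
  "b < 2 ^ length cs \<Longrightarrow>
     ham_count (c # cs) (2 * a + 1) (2 ^ length cs + b) =
       (if even c then a + 1 else a) + ham_count cs (if even c then a else a + 1) b"
  using ham_y_less[of cs, THEN trans_less_add1] unfolding ham_count_Cons_odd
  by (cases c rule: digit_parity_cases) (simp_all add: ham_count_def)

lemma ham_disc_Cons_even_low:
  "b < 2 ^ length cs \<Longrightarrow> ham_disc (c # cs) (2 * a) b = ham_disc cs a b"
  using ham_count_Cons_even_low unfolding ham_disc_def by (simp add: field_simps)

lemma ham_disc_Cons_even_high: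
  "b < 2 ^ length cs \<Longrightarrow> ham_disc (c # cs) (2 * a) (2 ^ length cs + b) = ham_disc cs a b"
  using ham_count_Cons_even_high unfolding ham_disc_def by (simp add: field_simps)

lemma ham_disc_Cons_odd_low:
  "b < 2 ^ length cs \<Longrightarrow>
     ham_disc (c # cs) (2 * a + 1) b =
       ham_disc cs (if even c then a + 1 else a) b + half_sign c * real b / 2 ^ length cs"
  using ham_count_Cons_odd_low unfolding ham_disc_def half_sign_def by (simp add: field_simps)

lemma ham_disc_Cons_odd_high:
  "b < 2 ^ length cs \<Longrightarrow>
     ham_disc (c # cs) (2 * a + 1) (2 ^ length cs + b) =
       ham_disc cs (if even c then a else a + 1) b
       + half_sign c * (2 ^ length cs - real b) / 2 ^ length cs"
  using ham_count_Cons_odd_high unfolding ham_disc_def half_sign_def by (simp add: field_simps)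

lemma ham_disc_left_0 [simp]: "ham_disc cs 0 b = 0"
  by (simp add: ham_disc_def ham_count_def)

lemma ham_disc_right_0 [simp]: "ham_disc cs a 0 = 0"
  by (simp add: ham_disc_def ham_count_def)

lemma ham_disc_left_full: "b < 2 ^ length cs \<Longrightarrow> ham_disc cs (2 ^ length cs) b = 0"
proof (induction cs arbitrary: b)
  case Nil
  then show ?case by (simp add: ham_disc_def ham_count_def)
next
  case (Cons c cs)
  let ?N = "2 ^ length cs :: nat"
  have N: "(2::nat) ^ length (c # cs) = 2 * ?N" by simp
  show ?case
  proof (cases "b < ?N")
    case True
    then show ?thesis
      unfolding N using ham_disc_Cons_even_low Cons.IH by simp
  next
    case False
    then obtain b' where b: "b = ?N + b'" and "b' < ?N"
      using Cons.prems by (metis N add_diff_inverse_nat add_less_cancel_left mult_2)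
    then show ?thesis
      unfolding N b using ham_disc_Cons_even_high Cons.IH by simp
  qed
qed

definition disc_sum :: "nat list \<Rightarrow> real" where
  "disc_sum p = (\<Sum>a<2 ^ length p. \<Sum>b<2 ^ length p. ham_disc p a b)"

definition disc_prod_sum :: "nat list \<Rightarrow> nat list \<Rightarrow> real" where
  "disc_prod_sum p q = (\<Sum>a<2 ^ length p. \<Sum>b<2 ^ length p. ham_disc p a b * ham_disc q a b)"

definition disc_shift_prod_sum :: "nat list \<Rightarrow> nat list \<Rightarrow> real" where
  "disc_shift_prod_sum p q =
     (\<Sum>a<2 ^ length p. \<Sum>b<2 ^ length p.
        ham_disc p (a + 1) b * ham_disc q a b + ham_disc p a b * ham_disc q (a + 1) b)"

lemma sum_lessThan_add:
  fixes N M :: nat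
  shows "(\<Sum>b<N + M. g b) = (\<Sum>b<N. g b) + (\<Sum>b<M. g (N + b) :: 'a::comm_monoid_add)"
  by (induction M) (auto simp: algebra_simps)

lemma sum_grid_double:
  fixes N :: nat
  shows "(\<Sum>a<2 * N. \<Sum>b<2 * N. F a b) =
   (\<Sum>a<N. \<Sum>b<N. F (2 * a) b + F (2 * a) (N + b) + F (2 * a + 1) b + (F (2 * a + 1) (N + b) :: 'a::comm_monoid_add))"
proof -
  have "(\<Sum>a<2 * N. \<Sum>b<2 * N. F a b) = (\<Sum>a<2 * N. (\<Sum>b<N. F a b) + (\<Sum>b<N. F a (N + b)))"
    by (simp add: mult_2 sum_lessThan_add)
  then show ?thesis
    unfolding sum_lessThan_double by (simp add: sum.distrib algebra_simps)
qed

lemma sum_lessThan_shift_vanishing: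
  fixes N :: nat
  shows "G 0 = 0 \<Longrightarrow> G N = 0 \<Longrightarrow> (\<Sum>a<N. G (a + 1)) = (\<Sum>a<N. G a :: 'a::comm_monoid_add)"
  using sum.lessThan_Suc_shift[of G N] sum.lessThan_Suc[of G N] by simp

lemma sum_grid_shift:
  assumes "i \<le> 1"
  shows "(\<Sum>a<2 ^ length p. \<Sum>b<2 ^ length p. f b * ham_disc p (a + i) b) =
         (\<Sum>a<2 ^ length p. \<Sum>b<2 ^ length p. f b * ham_disc p a b)"
proof (cases "i = 0")
  case False
  with assms have i: "i = 1" by simp
  show ?thesis
    unfolding i
    by (rule sum_lessThan_shift_vanishing) (auto simp: ham_disc_left_full intro!: sum.neutral)
qed simp

lemma sum_grid_prod_shift:
  "length p = length q \<Longrightarrow>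
   (\<Sum>a<2 ^ length p. \<Sum>b<2 ^ length p. ham_disc p (a + 1) b * ham_disc q (a + 1) b) =
   (\<Sum>a<2 ^ length p. \<Sum>b<2 ^ length p. ham_disc p a b * ham_disc q a b)"
  by (rule sum_lessThan_shift_vanishing) (auto simp: ham_disc_left_full intro!: sum.neutral)

lemma disc_sum_Cons: "disc_sum (c # p) = 4 * disc_sum p + half_sign c * (2 ^ length p)\<^sup>2"
proof -
  let ?N = "2 ^ length p :: nat"
  have N: "(2::nat) ^ length (c # p) = 2 * ?N" by simp
  have "disc_sum (c # p) =
      (\<Sum>a<?N. \<Sum>b<?N. 3 * ham_disc p a b + 1 * ham_disc p (a + 1) b + half_sign c)"
    unfolding disc_sum_def N sum_grid_double
  proof (intro sum.cong refl)
    fix a b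
    assume "b \<in> {..<?N}"
    then have b: "b < ?N" by simp
    show "ham_disc (c # p) (2 * a) b + ham_disc (c # p) (2 * a) (?N + b)
        + ham_disc (c # p) (2 * a + 1) b + ham_disc (c # p) (2 * a + 1) (?N + b)
        = 3 * ham_disc p a b + 1 * ham_disc p (a + 1) b + half_sign c"
      unfolding ham_disc_Cons_even_low[OF b] ham_disc_Cons_even_high[OF b]
        ham_disc_Cons_odd_low[OF b] ham_disc_Cons_odd_high[OF b] half_sign_def
      by (cases "even c") (auto simp: field_simps)
  qed
  also have "\<dots> = 3 * disc_sum p + (\<Sum>a<?N. \<Sum>b<?N. 1 * ham_disc p (a + 1) b)
      + real ?N * real ?N * half_sign c"
    unfolding disc_sum_def by (simp add: sum.distrib sum_distrib_left)
  also have "\<dots> = 4 * disc_sum p + half_sign c * (2 ^ length p)\<^sup>2"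
    unfolding sum_grid_shift[of 1, OF order_refl] unfolding disc_sum_def
    by (simp add: power2_eq_square)
  finally show ?thesis .
qed
definition digit_balance :: "nat list \<Rightarrow> real" where
  "digit_balance p = sum_list (map half_sign p)"

definition complement_digits :: "nat list \<Rightarrow> nat list" where
  "complement_digits p = map (\<lambda>c. xor2 c 1) p"

lemma complement_digits_Cons: "complement_digits (c # p) = xor2 c 1 # complement_digits p"
  by (simp add: complement_digits_def)

lemma length_complement_digits [simp]: "length (complement_digits p) = length p"
  by (simp add: complement_digits_def)

lemma even_iff_odd_xor2_1: "even c \<longleftrightarrow> odd (xor2 c 1)"
  by (simp add: xor2_def)

lemma digit_balance_complement_digits: "digit_balance (complement_digits p) = - digit_balance p"
  by (induction p) (simp_all add: digit_balance_def complement_digits_def half_sign_def xor2_def)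

lemma disc_sum_eq: "disc_sum p = digit_balance p / 4 * (2 ^ length p)\<^sup>2"
proof (induction p)
  case Nil
  then show ?case by (simp add: disc_sum_def digit_balance_def)
next
  case (Cons c p)
  then show ?case
    by (simp add: disc_sum_Cons digit_balance_def field_simps power2_eq_square)
qed

lemma sum_grid_weighted_total:
  "(\<Sum>a<2 ^ length p. \<Sum>b<2 ^ length p. real b * ham_disc p a b) +
   (\<Sum>a<2 ^ length p. \<Sum>b<2 ^ length p. (2 ^ length p - real b) * ham_disc p a b) =
   2 ^ length p * disc_sum p"
  unfolding disc_sum_def sum.distrib[symmetric] sum_distrib_left
  by (intro sum.cong refl) (simp add: algebra_simps)

lemma sum_grid_cross_terms:
  assumes "i \<le> 1" "j \<le> 1" "k \<le> 1" "l \<le> 1" and len: "length p = length q"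
  shows "(\<Sum>a<2 ^ length p. \<Sum>b<2 ^ length p.
            real b * ham_disc q (a + i) b - real b * ham_disc p (a + j) b
          + (2 ^ length p - real b) * ham_disc q (a + k) b
          - (2 ^ length p - real b) * ham_disc p (a + l) b)
       = 2 ^ length p * (disc_sum q - disc_sum p)"
proof -
  have "(\<Sum>a<2 ^ length p. \<Sum>b<2 ^ length p.
            real b * ham_disc q (a + i) b - real b * ham_disc p (a + j) b
          + (2 ^ length p - real b) * ham_disc q (a + k) b
          - (2 ^ length p - real b) * ham_disc p (a + l) b)
     = (\<Sum>a<2 ^ length q. \<Sum>b<2 ^ length q. real b * ham_disc q (a + i) b)
     - (\<Sum>a<2 ^ length p. \<Sum>b<2 ^ length p. real b * ham_disc p (a + j) b)
     + (\<Sum>a<2 ^ length q. \<Sum>b<2 ^ length q. (2 ^ length q - real b) * ham_disc q (a + k) b)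
     - (\<Sum>a<2 ^ length p. \<Sum>b<2 ^ length p. (2 ^ length p - real b) * ham_disc p (a + l) b)"
    using len by (simp add: sum.distrib sum_subtractf)
  also have "\<dots> = 2 ^ length q * disc_sum q - 2 ^ length p * disc_sum p"
    unfolding sum_grid_shift[OF assms(1)] sum_grid_shift[OF assms(2)]
      sum_grid_shift[OF assms(3)] sum_grid_shift[OF assms(4)]
    using sum_grid_weighted_total[of p] sum_grid_weighted_total[of q] by linarith
  finally show ?thesis
    using len by (simp add: algebra_simps)
qed

lemma sum_lessThan_squares: "(\<Sum>b<N. real b ^ 2) = real N * (real N - 1) * (2 * real N - 1) / 6"
  by (induction N) (auto simp: field_simps power2_eq_square)

lemma sum_lessThan_real: "(\<Sum>b<N. real b) = real N * (real N - 1) / 2"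
  by (induction N) (auto simp: field_simps)

lemma sum_lessThan_squares_reflected:
  "(\<Sum>b<N. real b ^ 2 + (real N - real b) ^ 2) = real N * (2 * real N ^ 2 + 1) / 3"
proof -
  have "(\<Sum>b<N. real b ^ 2 + (real N - real b) ^ 2) =
      (\<Sum>b<N. 2 * real b ^ 2 - 2 * real N * real b + real N ^ 2)"
    by (intro sum.cong refl) (simp add: power2_eq_square algebra_simps)
  also have "\<dots> = 2 * (\<Sum>b<N. real b ^ 2) - 2 * real N * (\<Sum>b<N. real b) + real N * real N ^ 2"
    by (simp add: sum.distrib sum_subtractf sum_distrib_left)
  finally show ?thesis
    unfolding sum_lessThan_squares sum_lessThan_real
    by (simp add: field_simps power2_eq_square power3_eq_cube)
qed

lemma disc_prod_sum_Cons:
  assumes len: "length p = length q" and complementary: "even c \<longleftrightarrow> odd d"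
  shows "disc_prod_sum (c # p) (d # q) =
           2 * disc_prod_sum p q + disc_shift_prod_sum p q + half_sign c * (disc_sum q - disc_sum p)
           - (2 * (2 ^ length p)\<^sup>2 + 1) / 12"
proof -
  let ?N = "2 ^ length p :: nat"
  define e where "e = half_sign c"
  \<comment> \<open>\<open>D\<^sub>c\<^sub>#\<^sub>p(2a+1,\<cdot>)\<close> reads \<open>D\<^sub>p\<close> at \<open>a+\<delta>\<close> on the lower half and at \<open>a+1-\<delta>\<close> on the upper
    half; the complementary digit \<open>d\<close> swaps the two offsets for \<open>q\<close>.\<close>
  define \<delta> :: nat where "\<delta> = (if even c then 1 else 0)"
  define cross where "cross a b =
      real b * ham_disc q (a + (1 - \<delta>)) b - real b * ham_disc p (a + \<delta>) b
    + (2 ^ length p - real b) * ham_disc q (a + \<delta>) b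
    - (2 ^ length p - real b) * ham_disc p (a + (1 - \<delta>)) b" for a b
  define sq where "sq b = real b ^ 2 + (real ?N - real b) ^ 2" for b
  have N: "(2::nat) ^ length (c # p) = 2 * ?N" by simp
  have "disc_prod_sum (c # p) (d # q) = (\<Sum>a<?N. \<Sum>b<?N. 2 * (ham_disc p a b * ham_disc q a b)
      + (ham_disc p (a + 1) b * ham_disc q a b + ham_disc p a b * ham_disc q (a + 1) b)
      + (e / ?N) * cross a b - (1 / (4 * ?N\<^sup>2)) * sq b)"
    unfolding disc_prod_sum_def N sum_grid_double
  proof (intro sum.cong refl)
    fix a b
    assume "b \<in> {..<?N}"
    then have b: "b < ?N" by simp
    then have bq: "b < 2 ^ length q" using len by simp
    note split = ham_disc_Cons_even_low[OF b] ham_disc_Cons_even_high[OF b]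
      ham_disc_Cons_odd_low[OF b] ham_disc_Cons_odd_high[OF b]
      ham_disc_Cons_even_low[OF bq, unfolded len[symmetric]]
      ham_disc_Cons_even_high[OF bq, unfolded len[symmetric]]
      ham_disc_Cons_odd_low[OF bq, unfolded len[symmetric]]
      ham_disc_Cons_odd_high[OF bq, unfolded len[symmetric]]
    show "ham_disc (c # p) (2 * a) b * ham_disc (d # q) (2 * a) b
        + ham_disc (c # p) (2 * a) (?N + b) * ham_disc (d # q) (2 * a) (?N + b)
        + ham_disc (c # p) (2 * a + 1) b * ham_disc (d # q) (2 * a + 1) b
        + ham_disc (c # p) (2 * a + 1) (?N + b) * ham_disc (d # q) (2 * a + 1) (?N + b)
      = 2 * (ham_disc p a b * ham_disc q a b)
        + (ham_disc p (a + 1) b * ham_disc q a b + ham_disc p a b * ham_disc q (a + 1) b)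
        + (e / ?N) * cross a b - (1 / (4 * ?N\<^sup>2)) * sq b"
      unfolding split e_def \<delta>_def cross_def sq_def half_sign_def using complementary
      by (cases "even c") (auto simp: field_simps power2_eq_square)
  qed
  also have "\<dots> = 2 * disc_prod_sum p q + disc_shift_prod_sum p q
      + (e / ?N) * (\<Sum>a<?N. \<Sum>b<?N. cross a b)
      - (1 / (4 * ?N\<^sup>2)) * (\<Sum>a<?N. \<Sum>b<?N. sq b)"
    unfolding disc_prod_sum_def disc_shift_prod_sum_def
    by (simp add: sum.distrib sum_subtractf sum_distrib_left)
  also have "(\<Sum>a<?N. \<Sum>b<?N. cross a b) = 2 ^ length p * (disc_sum q - disc_sum p)"
    unfolding cross_def by (rule sum_grid_cross_terms) (use len in \<open>auto simp: \<delta>_def\<close>)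
  also have "(\<Sum>a<?N. \<Sum>b<?N. sq b) = 2 ^ length p * (2 ^ length p * (2 * (2 ^ length p)\<^sup>2 + 1) / 3)"
    unfolding sq_def sum_lessThan_squares_reflected by simp
  also have "2 * disc_prod_sum p q + disc_shift_prod_sum p q
      + (e / ?N) * (2 ^ length p * (disc_sum q - disc_sum p))
      - (1 / (4 * ?N\<^sup>2)) * (2 ^ length p * (2 ^ length p * (2 * (2 ^ length p)\<^sup>2 + 1) / 3))
    = 2 * disc_prod_sum p q + disc_shift_prod_sum p q + e * (disc_sum q - disc_sum p)
      - (2 * (2 ^ length p)\<^sup>2 + 1) / 12"
    by (simp add: power2_eq_square)
  finally show ?thesis
    unfolding e_def .
qed

lemma disc_shift_prod_sum_Cons:
  assumes len: "length p = length q" and complementary: "even c \<longleftrightarrow> odd d"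
  shows "disc_shift_prod_sum (c # p) (d # q) =
           2 * disc_shift_prod_sum p q + 4 * disc_prod_sum p q
           + 2 * half_sign c * (disc_sum q - disc_sum p)"
proof -
  let ?N = "2 ^ length p :: nat"
  define e where "e = half_sign c"
  have N: "(2::nat) ^ length (c # p) = 2 * ?N" by simp
  have succ: "2 * a + 1 + 1 = 2 * (a + 1)" for a :: nat by simp
  have "disc_shift_prod_sum (c # p) (d # q) = (\<Sum>a<?N. \<Sum>b<?N. 2 * (ham_disc p a b * ham_disc q a b)
      + 2 * (ham_disc p (a + 1) b * ham_disc q a b + ham_disc p a b * ham_disc q (a + 1) b)
      + 2 * (ham_disc p (a + 1) b * ham_disc q (a + 1) b)
      + e * (ham_disc q a b - ham_disc p a b + ham_disc q (a + 1) b - ham_disc p (a + 1) b))"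
    unfolding disc_shift_prod_sum_def N sum_grid_double succ
  proof (intro sum.cong refl)
    fix a b
    assume "b \<in> {..<?N}"
    then have b: "b < ?N" by simp
    then have bq: "b < 2 ^ length q" using len by simp
    note split = ham_disc_Cons_even_low[OF b] ham_disc_Cons_even_high[OF b]
      ham_disc_Cons_odd_low[OF b] ham_disc_Cons_odd_high[OF b]
      ham_disc_Cons_even_low[OF bq, unfolded len[symmetric]]
      ham_disc_Cons_even_high[OF bq, unfolded len[symmetric]]
      ham_disc_Cons_odd_low[OF bq, unfolded len[symmetric]]
      ham_disc_Cons_odd_high[OF bq, unfolded len[symmetric]]
    show "ham_disc (c # p) (2 * a + 1) b * ham_disc (d # q) (2 * a) b
        + ham_disc (c # p) (2 * a) b * ham_disc (d # q) (2 * a + 1) b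
        + (ham_disc (c # p) (2 * a + 1) (?N + b) * ham_disc (d # q) (2 * a) (?N + b)
          + ham_disc (c # p) (2 * a) (?N + b) * ham_disc (d # q) (2 * a + 1) (?N + b))
        + (ham_disc (c # p) (2 * (a + 1)) b * ham_disc (d # q) (2 * a + 1) b
          + ham_disc (c # p) (2 * a + 1) b * ham_disc (d # q) (2 * (a + 1)) b)
        + (ham_disc (c # p) (2 * (a + 1)) (?N + b) * ham_disc (d # q) (2 * a + 1) (?N + b)
          + ham_disc (c # p) (2 * a + 1) (?N + b) * ham_disc (d # q) (2 * (a + 1)) (?N + b))
      = 2 * (ham_disc p a b * ham_disc q a b)
        + 2 * (ham_disc p (a + 1) b * ham_disc q a b + ham_disc p a b * ham_disc q (a + 1) b)
        + 2 * (ham_disc p (a + 1) b * ham_disc q (a + 1) b)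
        + e * (ham_disc q a b - ham_disc p a b + ham_disc q (a + 1) b - ham_disc p (a + 1) b)"
      unfolding split e_def half_sign_def using complementary
      by (cases "even c") (auto simp: field_simps)
  qed
  also have "\<dots> = 2 * disc_prod_sum p q + 2 * disc_shift_prod_sum p q + 2 * disc_prod_sum p q
      + e * (2 * (disc_sum q - disc_sum p))"
  proof -
    have shift_p: "(\<Sum>a<?N. \<Sum>b<?N. ham_disc p (a + 1) b) = disc_sum p"
      using sum_grid_shift[of 1 "\<lambda>_. 1" p] by (simp add: disc_sum_def)
    have shift_q: "(\<Sum>a<?N. \<Sum>b<?N. ham_disc q (a + 1) b) = disc_sum q"
      using sum_grid_shift[of 1 "\<lambda>_. 1" q] len by (simp add: disc_sum_def)
    have shift_pq: "(\<Sum>a<?N. \<Sum>b<?N. ham_disc p (a + 1) b * ham_disc q (a + 1) b) = disc_prod_sum p q"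
      using sum_grid_prod_shift[OF len] by (simp add: disc_prod_sum_def)
    show ?thesis
      by (simp only: sum.distrib sum_subtractf shift_p shift_q shift_pq flip: sum_distrib_left)
        (simp add: disc_prod_sum_def disc_shift_prod_sum_def disc_sum_def len sum.distrib algebra_simps)
  qed
  finally show ?thesis
    unfolding e_def by simp
qed

lemma disc_sum_complement_digits_diff:
  "disc_sum (complement_digits p) - disc_sum p = - digit_balance p / 2 * (2 ^ length p)\<^sup>2"
  by (simp add: disc_sum_eq digit_balance_complement_digits)

lemma disc_prod_sum_complement_digits:
  assumes "p \<noteq> []"
  shows "disc_prod_sum p (complement_digits p) =
           (2 ^ length p)\<^sup>2 * (- (digit_balance p)\<^sup>2 / 16 - real (length p) / 192 - 5 / 144) - 1 / 36
       \<and> disc_shift_prod_sum p (complement_digits p) =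
           2 * disc_prod_sum p (complement_digits p) + (2 ^ length p)\<^sup>2 / 12 + 1 / 6"
  using assms
proof (induction p rule: list_nonempty_induct)
  case (single c)
  have "disc_prod_sum [] [] = 0" "disc_shift_prod_sum [] [] = 0" "disc_sum [] = 0"
    by (simp_all add: disc_prod_sum_def disc_shift_prod_sum_def disc_sum_def)
  then show ?case
    using disc_prod_sum_Cons[where p = "[]" and q = "[]", OF refl even_iff_odd_xor2_1]
      disc_shift_prod_sum_Cons[where p = "[]" and q = "[]", OF refl even_iff_odd_xor2_1]
    by (simp add: complement_digits_def digit_balance_def half_sign_def power2_eq_square)
next
  case (cons c p)
  let ?q = "complement_digits p"
  define n :: real where "n = 2 ^ length p"
  have len: "length p = length ?q" by simp
  have S: "disc_prod_sum (c # p) (complement_digits (c # p)) =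
      2 * disc_prod_sum p ?q + disc_shift_prod_sum p ?q - digit_balance p / 2 * n\<^sup>2 * half_sign c
      - (2 * n\<^sup>2 + 1) / 12"
    unfolding complement_digits_Cons n_def disc_prod_sum_Cons[OF len even_iff_odd_xor2_1]
      disc_sum_complement_digits_diff by simp
  have V: "disc_shift_prod_sum (c # p) (complement_digits (c # p)) =
      2 * disc_shift_prod_sum p ?q + 4 * disc_prod_sum p ?q - digit_balance p * n\<^sup>2 * half_sign c"
    unfolding complement_digits_Cons n_def disc_shift_prod_sum_Cons[OF len even_iff_odd_xor2_1]
      disc_sum_complement_digits_diff by simp
  have balance: "digit_balance (c # p) = half_sign c + digit_balance p"
    by (simp add: digit_balance_def)
  have N: "(2::real) ^ length (c # p) = 2 * n"
    by (simp add: n_def)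
  have "(half_sign c)\<^sup>2 = 1 / 4"
    by (simp add: half_sign_def power2_eq_square)
  moreover obtain IS: "disc_prod_sum p ?q =
        n\<^sup>2 * (- (digit_balance p)\<^sup>2 / 16 - real (length p) / 192 - 5 / 144) - 1 / 36"
      and IV: "disc_shift_prod_sum p ?q = 2 * disc_prod_sum p ?q + n\<^sup>2 / 12 + 1 / 6"
    using cons.IH unfolding n_def by blast
  ultimately show ?case
    unfolding S V balance N n_def[symmetric] IV IS
    by (simp add: field_simps power2_eq_square)
qed

definition digits_value :: "(nat \<Rightarrow> nat) \<Rightarrow> nat \<Rightarrow> nat" where
  "digits_value d m = (\<Sum>i<m. d i * 2 ^ i)"

lemma digits_value_Suc: "digits_value d (Suc m) = d 0 + 2 * digits_value (\<lambda>i. d (Suc i)) m"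
  unfolding digits_value_def sum.lessThan_Suc_shift by (simp add: sum_distrib_left algebra_simps)

lemma digits_value_less: "(\<And>i. i < m \<Longrightarrow> d i \<le> 1) \<Longrightarrow> digits_value d m < 2 ^ m"
proof (induction m arbitrary: d)
  case 0
  then show ?case by (simp add: digits_value_def)
next
  case (Suc m)
  have "digits_value (\<lambda>i. d (Suc i)) m < 2 ^ m" "d 0 \<le> 1"
    using Suc by auto
  then show ?case
    unfolding digits_value_Suc by simp
qed

lemma digits_value_digit:
  "(\<And>i. i < m \<Longrightarrow> d i \<le> 1) \<Longrightarrow> k < m \<Longrightarrow> digits_value d m div 2 ^ k mod 2 = d k"
proof (induction m arbitrary: d k)
  case 0
  then show ?case by simp
next
  case (Suc m)
  have d0: "d 0 \<le> 1" using Suc.prems by auto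
  show ?case
  proof (cases k)
    case 0
    then show ?thesis unfolding digits_value_Suc using d0 by simp
  next
    case (Suc k')
    have "digits_value d (Suc m) div 2 = digits_value (\<lambda>i. d (Suc i)) m"
      unfolding digits_value_Suc using d0 by simp
    then have "digits_value d (Suc m) div 2 ^ k = digits_value (\<lambda>i. d (Suc i)) m div 2 ^ k'"
      unfolding Suc by (simp add: div_mult2_eq)
    also have "\<dots> mod 2 = d (Suc k')"
      using Suc.IH[of "\<lambda>i. d (Suc i)" k'] Suc.prems \<open>k = Suc k'\<close> by auto
    finally show ?thesis using Suc by simp
  qed
qed

lemma digits_value_bits: "digits_value (\<lambda>i. X div 2 ^ i mod 2) m = X mod 2 ^ m"
proof (induction m arbitrary: X)
  case 0
  then show ?case by (simp add: digits_value_def)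
next
  case (Suc m)
  have "digits_value (\<lambda>i. X div 2 ^ i mod 2) (Suc m) =
      X mod 2 + 2 * digits_value (\<lambda>i. (X div 2) div 2 ^ i mod 2) m"
    unfolding digits_value_Suc by (simp add: div_mult2_eq)
  also have "\<dots> = X mod 2 ^ Suc m"
    using Suc.IH by (simp add: mod_mult2_eq)
  finally show ?case .
qed

lemma ham_y_map_upt:
  "ham_y (map \<sigma> [k..<k + n]) X = (\<Sum>i<n. xor2 (X div 2 ^ i mod 2) (\<sigma> (k + i)) * 2 ^ (n - 1 - i))"
proof (induction n arbitrary: k X)
  case 0
  then show ?case by simp
next
  case (Suc n)
  have "[k..<k + Suc n] = k # [Suc k..<Suc k + n]"
    by (simp add: upt_conv_Cons)
  then have "ham_y (map \<sigma> [k..<k + Suc n]) X =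
      xor2 (X mod 2) (\<sigma> k) * 2 ^ n + ham_y (map \<sigma> [Suc k..<Suc k + n]) (X div 2)"
    by (simp only: list.map ham_y.simps length_map length_upt) simp
  also have "\<dots> = (\<Sum>i<Suc n. xor2 (X div 2 ^ i mod 2) (\<sigma> (k + i)) * 2 ^ (Suc n - 1 - i))"
    unfolding Suc.IH sum.lessThan_Suc_shift by (simp add: div_mult2_eq)
  finally show ?case .
qed

definition ham_point :: "nat \<Rightarrow> (nat \<Rightarrow> nat) \<Rightarrow> nat \<Rightarrow> real \<times> real" where
  "ham_point m \<sigma> X = (real X / 2 ^ m, real (ham_y (map \<sigma> [1..<Suc m]) X) / 2 ^ m)"

lemma PiE_01_le_1: "t \<in> {1..m} \<rightarrow>\<^sub>E {0, 1::nat} \<Longrightarrow> i < m \<Longrightarrow> t (Suc i) \<le> 1"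
  using PiE_mem[of t "{1..m}" "\<lambda>_. {0, 1}" "Suc i"] by auto

lemma hammersley_point_eq_ham_point:
  assumes t: "t \<in> {1..m} \<rightarrow>\<^sub>E {0, 1}"
  shows "((\<Sum>j=1..m. real (t j) / 2 ^ (m + 1 - j)), (\<Sum>j=1..m. real (xor2 (t j) (\<sigma> j)) / 2 ^ j))
       = ham_point m \<sigma> (digits_value (\<lambda>i. t (Suc i)) m)"
proof -
  note digit_le = PiE_01_le_1[OF t]
  have x: "(\<Sum>j=1..m. real (t j) / 2 ^ (m + 1 - j)) = real (digits_value (\<lambda>i. t (Suc i)) m) / 2 ^ m"
    unfolding sum.atLeast1_atMost_eq[folded One_nat_def] digits_value_def of_nat_sum
      sum_divide_distrib
  proof (intro sum.cong refl)
    fix i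
    assume "i \<in> {..<m}"
    then have "(2::real) ^ m = 2 ^ (m - i) * 2 ^ i"
      by (simp add: power_add[symmetric])
    then show "real (t (Suc i)) / 2 ^ (m + 1 - Suc i) = real (t (Suc i) * 2 ^ i) / 2 ^ m"
      by (simp add: field_simps)
  qed
  have ham_y_digits:
      "ham_y (map \<sigma> [1..<Suc m]) X = (\<Sum>i<m. xor2 (X div 2 ^ i mod 2) (\<sigma> (Suc i)) * 2 ^ (m - 1 - i))"
    for X
    using ham_y_map_upt[of \<sigma> 1 m X] by simp
  have y: "(\<Sum>j=1..m. real (xor2 (t j) (\<sigma> j)) / 2 ^ j) =
      real (ham_y (map \<sigma> [1..<Suc m]) (digits_value (\<lambda>i. t (Suc i)) m)) / 2 ^ m"
    unfolding ham_y_digits sum.atLeast1_atMost_eq[folded One_nat_def] of_nat_sum sum_divide_distrib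
  proof (intro sum.cong refl)
    fix i
    assume "i \<in> {..<m}"
    then have i: "i < m" by simp
    then have "m = (m - 1 - i) + Suc i" by simp
    then have "(2::real) ^ m = 2 ^ (m - 1 - i) * 2 ^ Suc i"
      by (metis power_add)
    moreover have "digits_value (\<lambda>i. t (Suc i)) m div 2 ^ i mod 2 = t (Suc i)"
      using digits_value_digit[OF digit_le i] .
    ultimately show "real (xor2 (t (Suc i)) (\<sigma> (Suc i))) / 2 ^ Suc i =
      real (xor2 (digits_value (\<lambda>i. t (Suc i)) m div 2 ^ i mod 2) (\<sigma> (Suc i)) * 2 ^ (m - 1 - i)) / 2 ^ m"
      by (simp add: field_simps)
  qed
  show ?thesis
    unfolding x y ham_point_def ..
qed

lemma hammersley_eq_image_ham_point: "hammersley m \<sigma> = ham_point m \<sigma> ` {..<2 ^ m}"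
proof
  show "hammersley m \<sigma> \<subseteq> ham_point m \<sigma> ` {..<2 ^ m}"
  proof
    fix P
    assume "P \<in> hammersley m \<sigma>"
    then obtain t where t: "t \<in> {1..m} \<rightarrow>\<^sub>E {0, 1}"
      and P: "P = ((\<Sum>j=1..m. real (t j) / 2 ^ (m + 1 - j)), (\<Sum>j=1..m. real (xor2 (t j) (\<sigma> j)) / 2 ^ j))"
      unfolding hammersley_def by blast
    have "digits_value (\<lambda>i. t (Suc i)) m < 2 ^ m"
      using PiE_01_le_1[OF t] by (rule digits_value_less)
    then show "P \<in> ham_point m \<sigma> ` {..<2 ^ m}"
      unfolding P hammersley_point_eq_ham_point[OF t] by simp
  qed
next
  show "ham_point m \<sigma> ` {..<2 ^ m} \<subseteq> hammersley m \<sigma>"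
  proof
    fix P
    assume "P \<in> ham_point m \<sigma> ` {..<2 ^ m}"
    then obtain X where X: "X < 2 ^ m" and P: "P = ham_point m \<sigma> X" by auto
    define t where "t = restrict (\<lambda>j. X div 2 ^ (j - 1) mod 2) {1..m}"
    have t: "t \<in> {1..m} \<rightarrow>\<^sub>E {0, 1}"
      unfolding t_def by auto
    have "digits_value (\<lambda>i. t (Suc i)) m = digits_value (\<lambda>i. X div 2 ^ i mod 2) m"
      unfolding digits_value_def t_def by (intro sum.cong refl) auto
    also have "\<dots> = X"
      using X by (simp add: digits_value_bits)
    finally have "P = ((\<Sum>j=1..m. real (t j) / 2 ^ (m + 1 - j)),
        (\<Sum>j=1..m. real (xor2 (t j) (\<sigma> j)) / 2 ^ j))"
      unfolding P hammersley_point_eq_ham_point[OF t] by simp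
    then show "P \<in> hammersley m \<sigma>"
      unfolding hammersley_def using t by blast
  qed
qed

lemma inj_on_ham_point: "inj_on (ham_point m \<sigma>) A"
  by (rule inj_onI) (auto simp: ham_point_def)

lemma card_hammersley: "card (hammersley m \<sigma>) = 2 ^ m"
  unfolding hammersley_eq_image_ham_point by (simp add: card_image[OF inj_on_ham_point])

lemma local_disc_hammersley:
  assumes "a \<le> 2 ^ m"
  shows "local_disc (hammersley m \<sigma>) (real a / 2 ^ m) (real b / 2 ^ m) = ham_disc (map \<sigma> [1..<Suc m]) a b"
proof -
  let ?cs = "map \<sigma> [1..<Suc m]"
  have "{P \<in> hammersley m \<sigma>. fst P < real a / 2 ^ m \<and> snd P < real b / 2 ^ m}
      = ham_point m \<sigma> ` {X \<in> {..<a}. ham_y ?cs X < b}"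
    unfolding hammersley_eq_image_ham_point using assms
    by (auto simp: ham_point_def divide_less_cancel image_iff simp del: upt_Suc)
  then have "real (card {P \<in> hammersley m \<sigma>. fst P < real a / 2 ^ m \<and> snd P < real b / 2 ^ m})
      = real (card {X \<in> {..<a}. ham_y ?cs X < b})"
    by (simp add: card_image[OF inj_on_ham_point])
  also have "\<dots> = ham_count ?cs a b"
    unfolding ham_count_def real_of_card by (rule sum.inter_filter) simp
  finally show ?thesis
    unfolding local_disc_def ham_disc_def card_hammersley by simp
qed

lemma sum_Qstar_local_disc_prod:
  "(\<Sum>\<alpha>\<in>Qstar m. \<Sum>\<beta>\<in>Qstar m. local_disc (hammersley m \<sigma>) \<alpha> \<beta> * local_disc (hammersley m \<tau>) \<alpha> \<beta>)
   = disc_prod_sum (map \<sigma> [1..<Suc m]) (map \<tau> [1..<Suc m])"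
proof -
  define scale :: "nat \<Rightarrow> real" where "scale k = real k / 2 ^ m" for k
  have Q: "Qstar m = scale ` {1..2 ^ m - 1}"
    unfolding Qstar_def scale_def by auto
  have inj: "inj_on scale A" for A
    by (auto simp: scale_def inj_on_def)
  have grid: "{..<2 ^ m} = insert 0 {1..2 ^ m - 1 :: nat}"
    by auto
  have "(\<Sum>\<alpha>\<in>Qstar m. \<Sum>\<beta>\<in>Qstar m. local_disc (hammersley m \<sigma>) \<alpha> \<beta> * local_disc (hammersley m \<tau>) \<alpha> \<beta>)
      = (\<Sum>a\<in>{1..2 ^ m - 1}. \<Sum>b\<in>{1..2 ^ m - 1}.
           ham_disc (map \<sigma> [1..<Suc m]) a b * ham_disc (map \<tau> [1..<Suc m]) a b)"
    unfolding Q sum.reindex[OF inj] o_def scale_def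
  proof (intro sum.cong refl)
    fix a b :: nat
    assume "a \<in> {1..2 ^ m - 1}"
    then have "a \<le> 2 ^ m" by auto
    then show "local_disc (hammersley m \<sigma>) (real a / 2 ^ m) (real b / 2 ^ m)
        * local_disc (hammersley m \<tau>) (real a / 2 ^ m) (real b / 2 ^ m)
      = ham_disc (map \<sigma> [1..<Suc m]) a b * ham_disc (map \<tau> [1..<Suc m]) a b"
      by (simp only: local_disc_hammersley)
  qed
  also have "\<dots> = disc_prod_sum (map \<sigma> [1..<Suc m]) (map \<tau> [1..<Suc m])"
    unfolding disc_prod_sum_def length_map length_upt diff_Suc_1 grid by simp
  finally show ?thesis .
qed

lemma digit_balance_eq:
  assumes "\<forall>i\<in>{1..m}. \<sigma> i \<in> {0, 1}"
  shows "digit_balance (map \<sigma> [1..<Suc m]) = real (card {i \<in> {1..m}. \<sigma> i = 0}) - real m / 2"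
proof -
  have "digit_balance (map \<sigma> [1..<Suc m]) = (\<Sum>i\<in>{1..m}. half_sign (\<sigma> i))"
    unfolding digit_balance_def map_map interv_sum_list_conv_sum_set_nat o_def set_upt
      atLeastLessThanSuc_atLeastAtMost ..
  also have "\<dots> = (\<Sum>i\<in>{1..m}. (if \<sigma> i = 0 then 1 else 0) - 1 / 2)"
  proof (intro sum.cong refl)
    fix i
    assume "i \<in> {1..m}"
    then have "\<sigma> i = 0 \<or> \<sigma> i = 1"
      using assms by auto
    then show "half_sign (\<sigma> i) = (if \<sigma> i = 0 then 1 else 0) - 1 / 2"
      by (auto simp: half_sign_def)
  qed
  also have "\<dots> = real (card {i \<in> {1..m}. \<sigma> i = 0}) - real m / 2"
    unfolding sum_subtractf real_of_card by (subst sum.inter_filter) simp_all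
  finally show ?thesis .
qed

theorem lemma5:
  fixes m :: nat and \<sigma> :: "nat \<Rightarrow> nat"
  assumes "m \<ge> 1"
    and "\<forall>i\<in>{1..m}. \<sigma> i \<in> {0, 1}"
  defines "l \<equiv> card {i \<in> {1..m}. \<sigma> i = 0}"
  shows "(1 / 2 ^ (2 * m)) *
           (\<Sum>\<alpha>\<in>Qstar m. \<Sum>\<beta>\<in>Qstar m.
              local_disc (hammersley m \<sigma>) \<alpha> \<beta> *
              local_disc (hammersley m (sigma_star \<sigma>)) \<alpha> \<beta>)
         = - (real m ^ 2 / 64) - real l ^ 2 / 16 + real l * real m / 16
           - real m / 192 - 5 / 144 - 1 / (9 * 2 ^ (2 * m + 2))"
proof -
  define cs where "cs = map \<sigma> [1..<Suc m]"
  have "map (sigma_star \<sigma>) [1..<Suc m] = complement_digits cs"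
    unfolding complement_digits_def sigma_star_def cs_def by simp
  then have sum_eq: "(\<Sum>\<alpha>\<in>Qstar m. \<Sum>\<beta>\<in>Qstar m.
      local_disc (hammersley m \<sigma>) \<alpha> \<beta> * local_disc (hammersley m (sigma_star \<sigma>)) \<alpha> \<beta>)
      = disc_prod_sum cs (complement_digits cs)"
    unfolding sum_Qstar_local_disc_prod cs_def by simp
  have closed_form: "disc_prod_sum cs (complement_digits cs)
      = (2 ^ m)\<^sup>2 * (- (real l - real m / 2)\<^sup>2 / 16 - real m / 192 - 5 / 144) - 1 / 36"
    using disc_prod_sum_complement_digits[of cs] assms(1) digit_balance_eq[OF assms(2)]
    by (simp add: cs_def l_def)
  have powers: "(2::real) ^ (2 * m) = (2 ^ m)\<^sup>2" "(2::real) ^ (2 * m + 2) = 4 * (2 ^ m)\<^sup>2"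
    by (simp_all add: power_mult[symmetric] mult.commute)
  show ?thesis
    unfolding sum_eq closed_form powers by (simp add: field_simps power2_eq_square)
qed

end
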